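(* Let $R$ be a commutative ring with unit, $M$ an $R$-module, $N$ a submodule of $M$, $\mathbf A$ a $k\times l$ matrix with entries in $R$, and $r,s\ge1$ integers. (1) If $\mathbf A$ is partition regular over $M$ for $r+s$ colours, then either $\mathbf A$ is partition regular over $N$ for $r$ colours or $\mathbf A$ is partition regular over $M/N$ for $s$ colours. (2) If $M=\bigoplus_{i=1}^t M_i$ is a direct sum of finitely many $R$-modules $M_i$, then $\mathbf A$ is partition regular over $M$ if and only if $\mathbf A$ is partition regular over some $M_i$.
   Context: $\mathbf{A}$ is partition regular over an $R$-module $P$ for $r$ colours if for every map $\chi\colon P\to\{1,\dots,r\}$ there is $\mathbf{p}=(p_1,\dots,p_l)^{\intercal}\in P^l$ with $\mathbf{A}\mathbf{p}=0$, $\mathbf{p}\neq 0$ and $\chi(p_1)=\dots=\chi(p_l)$; it is partition regular over $P$ if this holds for every $r\ge1$. *)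

theory Defs
  imports "HOL-Algebra.Module" "HOL-Algebra.QuotRing" "HOL-Library.FuncSet"
begin

text \<open>A k x l matrix over R is a function A :: nat => nat => 'a with entries A i j in carrier R
  for i < k, j < l; a vector in P^l is a function p :: nat => 'b with p j in carrier P for j < l.\<close>

definition partition_regular_colours ::
  "('a, 'b) module \<Rightarrow> (nat \<Rightarrow> nat \<Rightarrow> 'a) \<Rightarrow> nat \<Rightarrow> nat \<Rightarrow> nat \<Rightarrow> bool" where
  "partition_regular_colours P A k l r \<longleftrightarrow>
     (\<forall>\<chi> \<in> carrier P \<rightarrow> {1..r}. \<exists>p.
        (\<forall>j<l. p j \<in> carrier P) \<and>
        (\<forall>i<k. (\<Oplus>\<^bsub>P\<^esub> j\<in>{..<l}. A i j \<odot>\<^bsub>P\<^esub> p j) = \<zero>\<^bsub>P\<^esub>) \<and>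
        (\<exists>j<l. p j \<noteq> \<zero>\<^bsub>P\<^esub>) \<and>
        (\<forall>j<l. \<forall>j'<l. \<chi> (p j) = \<chi> (p j')))"

definition partition_regular ::
  "('a, 'b) module \<Rightarrow> (nat \<Rightarrow> nat \<Rightarrow> 'a) \<Rightarrow> nat \<Rightarrow> nat \<Rightarrow> bool" where
  "partition_regular P A k l \<longleftrightarrow> (\<forall>r\<ge>1. partition_regular_colours P A k l r)"

definition submodule_module :: "('a, 'b) module \<Rightarrow> 'b set \<Rightarrow> ('a, 'b) module" where
  "submodule_module M N = M\<lparr>carrier := N\<rparr>"

text \<open>The quotient module M/N: cosets N +> x, with coset addition and
  a . (N +> x) = N +> (a . x). Ring-multiplication fields are irrelevant.\<close>
definition quotient_module :: "('a, 'b) module \<Rightarrow> 'b set \<Rightarrow> ('a, 'b set) module" where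
  "quotient_module M N =
     \<lparr>carrier = a_rcosets\<^bsub>M\<^esub> N, mult = (\<lambda>X Y. undefined), one = undefined,
      zero = N, add = set_add M,
      smult = (\<lambda>a X. \<Union>x\<in>X. N +>\<^bsub>M\<^esub> (a \<odot>\<^bsub>M\<^esub> x))\<rparr>"

definition is_direct_sum :: "('a, 'b) module \<Rightarrow> (nat \<Rightarrow> 'b set) \<Rightarrow> nat set \<Rightarrow> bool" where
  "is_direct_sum M Ms I \<longleftrightarrow>
     (\<forall>i\<in>I. Ms i \<subseteq> carrier M) \<and>
     (\<forall>x\<in>carrier M. \<exists>!y. y \<in> (\<Pi>\<^sub>E i\<in>I. Ms i) \<and> x = (\<Oplus>\<^bsub>M\<^esub> i\<in>I. y i))"

end

theory Submission
  imports Defs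
begin

(* Both parts are colouring arguments.
   (1) Suppose \<psi> colours N with r colours and \<chi> colours M/N with s colours. Colour x \<in> M by
   \<psi> x if x \<in> N and by \<chi> (N + x) otherwise. A monochromatic nonzero solution for these r + s
   colours lies either entirely in N, where it is \<psi>-monochromatic, or entirely outside N, and then
   its image in M/N is a \<chi>-monochromatic solution, nonzero because its entries are not in N.
   (2) A solution over a summand M_i is a solution over M. Conversely, colour x \<in> M by the tuple
   of the colours of its components x_i; the projections x \<mapsto> x_i are R-linear, so a monochromatic
   nonzero solution over M projects, in a coordinate where it does not vanish, to a monochromatic
   nonzero solution over that summand. *)

definition nonzero_solution ::
  "('a, 'b) module \<Rightarrow> (nat \<Rightarrow> nat \<Rightarrow> 'a) \<Rightarrow> nat \<Rightarrow> nat \<Rightarrow> (nat \<Rightarrow> 'b) \<Rightarrow> bool" where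
  "nonzero_solution P A k l p \<longleftrightarrow>
     (\<forall>j<l. p j \<in> carrier P) \<and>
     (\<forall>i<k. (\<Oplus>\<^bsub>P\<^esub> j\<in>{..<l}. A i j \<odot>\<^bsub>P\<^esub> p j) = \<zero>\<^bsub>P\<^esub>) \<and>
     (\<exists>j<l. p j \<noteq> \<zero>\<^bsub>P\<^esub>)"

definition monochromatic :: "('b \<Rightarrow> 'c) \<Rightarrow> nat \<Rightarrow> (nat \<Rightarrow> 'b) \<Rightarrow> bool" where
  "monochromatic \<chi> l p \<longleftrightarrow> (\<forall>j<l. \<forall>j'<l. \<chi> (p j) = \<chi> (p j'))"

lemma partition_regular_colours_iff:
  "partition_regular_colours P A k l r \<longleftrightarrow>
     (\<forall>\<chi> \<in> carrier P \<rightarrow> {1..r}. \<exists>p. nonzero_solution P A k l p \<and> monochromatic \<chi> l p)"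
  unfolding partition_regular_colours_def nonzero_solution_def monochromatic_def conj_assoc ..

lemma partition_regular_colours_monochromatic:
  assumes "partition_regular_colours P A k l r"
    and "\<chi> \<in> carrier P \<rightarrow> C" and "finite C" and "card C \<le> r"
  shows "\<exists>p. nonzero_solution P A k l p \<and> monochromatic \<chi> l p"
proof -
  obtain g where g: "bij_betw g C {1..card C}"
    using finite_same_card_bij[OF \<open>finite C\<close>, of "{1..card C}"] by auto
  have "g \<circ> \<chi> \<in> carrier P \<rightarrow> {1..r}"
  proof
    fix x assume "x \<in> carrier P"
    then have "g (\<chi> x) \<in> {1..card C}" using assms(2) bij_betw_apply[OF g] by blast
    then show "(g \<circ> \<chi>) x \<in> {1..r}" using assms(4) by simp
  qed
  then obtain p where p: "nonzero_solution P A k l p" "monochromatic (g \<circ> \<chi>) l p"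
    using assms(1) unfolding partition_regular_colours_iff by blast
  have "\<chi> (p j) \<in> C" if "j < l" for j
    using p(1) assms(2) that unfolding nonzero_solution_def by blast
  then have "monochromatic \<chi> l p"
    using p(2) bij_betw_imp_inj_on[OF g] unfolding monochromatic_def by (metis comp_apply inj_on_contraD)
  with p(1) show ?thesis by blast
qed

lemma comm_group_hom_finprod:
  assumes "comm_group G" and "comm_group H" and "h \<in> hom G H" and "f \<in> S \<rightarrow> carrier G"
  shows "finprod H (h \<circ> f) S = h (finprod G f S)"
proof -
  interpret G: comm_group G by fact
  interpret H: comm_group H by fact
  interpret group_hom G H h
    using assms(3) by (simp add: group_hom_def group_hom_axioms_def G.group_axioms H.group_axioms)
  show ?thesis
  proof (cases "finite S")
    case True
    then show ?thesis using assms(4)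
      by (induction S rule: finite_induct) (auto simp: G.finprod_insert H.finprod_insert Pi_iff)
  qed simp
qed

lemma carrier_submodule_module [simp]: "carrier (submodule_module M N) = N"
  by (simp add: submodule_module_def)

lemma finsum_submodule_module:
  assumes "module R M" and "submodule N R M" and "f \<in> S \<rightarrow> N"
  shows "finsum (submodule_module M N) f S = finsum M f S"
proof -
  interpret M: module R M by fact
  interpret N: module R "submodule_module M N"
    unfolding submodule_module_def using submodule.submodule_is_module[OF assms(2,1)] .
  have "id \<in> hom (add_monoid (submodule_module M N)) (add_monoid M)"
    using M.submoduleE(1)[OF assms(2)] by (auto simp: hom_def submodule_module_def)
  from comm_group_hom_finprod[OF N.a_comm_group M.a_comm_group this, of f S] assms(3)
  show ?thesis by (simp add: finsum_def submodule_module_def)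
qed

lemma nonzero_solution_submodule_module_iff:
  assumes "module R M" and "submodule N R M" and "\<forall>i<k. \<forall>j<l. A i j \<in> carrier R"
    and "\<forall>j<l. p j \<in> N"
  shows "nonzero_solution (submodule_module M N) A k l p \<longleftrightarrow> nonzero_solution M A k l p"
proof -
  interpret M: module R M by fact
  have "(\<Oplus>\<^bsub>submodule_module M N\<^esub> j\<in>{..<l}. A i j \<odot>\<^bsub>M\<^esub> p j) = (\<Oplus>\<^bsub>M\<^esub> j\<in>{..<l}. A i j \<odot>\<^bsub>M\<^esub> p j)"
    if "i < k" for i
    using assms(3,4) that M.submoduleE(4)[OF assms(2)]
    by (intro finsum_submodule_module[OF assms(1,2)]) blast
  then show ?thesis
    using assms(4) M.submoduleE(1)[OF assms(2)]
    unfolding nonzero_solution_def by (auto simp: submodule_module_def)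
qed

lemma partition_regular_colours_of_submodule_module:
  assumes "module R M" and "submodule N R M" and "\<forall>i<k. \<forall>j<l. A i j \<in> carrier R"
    and "partition_regular_colours (submodule_module M N) A k l r"
  shows "partition_regular_colours M A k l r"
  unfolding partition_regular_colours_iff
proof
  fix \<chi> assume "\<chi> \<in> carrier M \<rightarrow> {1..r}"
  then have "\<chi> \<in> carrier (submodule_module M N) \<rightarrow> {1..r}"
    using module.submoduleE(1)[OF assms(1,2)] by auto
  then obtain p where p: "nonzero_solution (submodule_module M N) A k l p" "monochromatic \<chi> l p"
    using assms(4) unfolding partition_regular_colours_iff by blast
  have "\<forall>j<l. p j \<in> N"
    using p(1) by (simp add: nonzero_solution_def)
  with p show "\<exists>p. nonzero_solution M A k l p \<and> monochromatic \<chi> l p"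
    using nonzero_solution_submodule_module_iff[OF assms(1-3)] by blast
qed

lemma abelian_subgroup_submodule:
  assumes "module R M" and "submodule N R M"
  shows "abelian_subgroup N M"
proof -
  interpret M: module R M by fact
  show ?thesis
    using submodule.axioms(1)[OF assms(2)] M.abelian_group_axioms
    by (intro abelian_subgroupI3 additive_subgroup.intro)
qed

lemma rcos_eq_submodule_iff:
  assumes "module R M" and "submodule N R M" and "x \<in> carrier M"
  shows "N +>\<^bsub>M\<^esub> x = N \<longleftrightarrow> x \<in> N"
proof -
  interpret N: abelian_subgroup N M using abelian_subgroup_submodule[OF assms(1,2)] .
  show ?thesis
    using N.a_rcos_const N.a_coset_join1[OF _ assms(3) N.a_subgroup] by blast
qed

lemma smult_quotient_module_rcos:
  assumes "module R M" and "submodule N R M" and "a \<in> carrier R" and "x \<in> carrier M"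
  shows "a \<odot>\<^bsub>quotient_module M N\<^esub> (N +>\<^bsub>M\<^esub> x) = N +>\<^bsub>M\<^esub> (a \<odot>\<^bsub>M\<^esub> x)"
proof -
  interpret M: module R M by fact
  interpret N: abelian_subgroup N M using abelian_subgroup_submodule[OF assms(1,2)] .
  have same_coset: "N +>\<^bsub>M\<^esub> (a \<odot>\<^bsub>M\<^esub> y) = N +>\<^bsub>M\<^esub> (a \<odot>\<^bsub>M\<^esub> x)"
    if "y \<in> N +>\<^bsub>M\<^esub> x" for y
  proof -
    have "\<exists>n\<in>N. y = n \<oplus>\<^bsub>M\<^esub> x"
      using that unfolding a_r_coset_def' by blast
    then obtain n where n: "n \<in> N" "y = n \<oplus>\<^bsub>M\<^esub> x" by blast
    then have "a \<odot>\<^bsub>M\<^esub> y = a \<odot>\<^bsub>M\<^esub> n \<oplus>\<^bsub>M\<^esub> a \<odot>\<^bsub>M\<^esub> x"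
      using assms(3,4) by (simp add: M.smult_r_distr)
    moreover have "a \<odot>\<^bsub>M\<^esub> n \<in> N"
      using M.submoduleE(4)[OF assms(2) assms(3) n(1)] .
    ultimately have "a \<odot>\<^bsub>M\<^esub> y \<in> N +>\<^bsub>M\<^esub> (a \<odot>\<^bsub>M\<^esub> x)"
      unfolding a_r_coset_def' by blast
    then show ?thesis
      using N.a_repr_independence'[OF _ M.smult_closed[OF assms(3,4)]] by simp
  qed
  then have "(\<Union>y\<in>N +>\<^bsub>M\<^esub> x. N +>\<^bsub>M\<^esub> (a \<odot>\<^bsub>M\<^esub> y)) = (\<Union>y\<in>N +>\<^bsub>M\<^esub> x. N +>\<^bsub>M\<^esub> (a \<odot>\<^bsub>M\<^esub> x))"
    by (rule SUP_cong[OF refl])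
  also have "\<dots> = N +>\<^bsub>M\<^esub> (a \<odot>\<^bsub>M\<^esub> x)"
    using N.a_rcos_self[OF assms(4)] by auto
  finally show ?thesis
    unfolding quotient_module_def by simp
qed

lemma finsum_quotient_module_lincomb:
  assumes "module R M" and "submodule N R M"
    and "a \<in> S \<rightarrow> carrier R" and "p \<in> S \<rightarrow> carrier M"
  shows "(\<Oplus>\<^bsub>quotient_module M N\<^esub> j\<in>S. a j \<odot>\<^bsub>quotient_module M N\<^esub> (N +>\<^bsub>M\<^esub> p j))
       = N +>\<^bsub>M\<^esub> (\<Oplus>\<^bsub>M\<^esub> j\<in>S. a j \<odot>\<^bsub>M\<^esub> p j)"
proof -
  interpret M: module R M by fact
  interpret N: abelian_subgroup N M using abelian_subgroup_submodule[OF assms(1,2)] .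
  interpret Q: comm_group "M A_Mod N" using N.a_factorgroup_is_comm_group .
  have coset_hom: "(\<lambda>x. N +>\<^bsub>M\<^esub> x) \<in> hom (add_monoid M) (M A_Mod N)"
    using N.a_r_coset_hom_A_Mod .
  have "(\<Oplus>\<^bsub>quotient_module M N\<^esub> j\<in>S. a j \<odot>\<^bsub>quotient_module M N\<^esub> (N +>\<^bsub>M\<^esub> p j))
      = finprod (M A_Mod N) (\<lambda>j. a j \<odot>\<^bsub>quotient_module M N\<^esub> (N +>\<^bsub>M\<^esub> p j)) S"
    unfolding finsum_def finprod_def quotient_module_def A_FactGroup_def FactGroup_def
      A_RCOSETS_def set_add_def by simp
  also have "\<dots> = finprod (M A_Mod N) ((\<lambda>x. N +>\<^bsub>M\<^esub> x) \<circ> (\<lambda>j. a j \<odot>\<^bsub>M\<^esub> p j)) S"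
  proof (rule Q.finprod_cong')
    have "(\<lambda>j. a j \<odot>\<^bsub>M\<^esub> p j) \<in> S \<rightarrow> carrier M"
      using assms(3,4) by auto
    then show "(\<lambda>x. N +>\<^bsub>M\<^esub> x) \<circ> (\<lambda>j. a j \<odot>\<^bsub>M\<^esub> p j) \<in> S \<rightarrow> carrier (M A_Mod N)"
      using coset_hom unfolding hom_def by auto
  qed (use assms(3,4) in \<open>simp_all add: smult_quotient_module_rcos[OF assms(1,2)] Pi_iff\<close>)
  also have "\<dots> = N +>\<^bsub>M\<^esub> (\<Oplus>\<^bsub>M\<^esub> j\<in>S. a j \<odot>\<^bsub>M\<^esub> p j)"
    using comm_group_hom_finprod[OF M.a_comm_group Q.comm_group_axioms coset_hom,
        of "\<lambda>j. a j \<odot>\<^bsub>M\<^esub> p j" S] assms(3,4)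
    by (auto simp: finsum_def)
  finally show ?thesis .
qed

lemma nonzero_solution_quotient_module:
  assumes "module R M" and "submodule N R M" and "\<forall>i<k. \<forall>j<l. A i j \<in> carrier R"
    and "nonzero_solution M A k l p" and "\<exists>j<l. p j \<notin> N"
  shows "nonzero_solution (quotient_module M N) A k l (\<lambda>j. N +>\<^bsub>M\<^esub> p j)"
proof -
  interpret M: module R M by fact
  interpret N: abelian_subgroup N M using abelian_subgroup_submodule[OF assms(1,2)] .
  have p: "\<forall>j<l. p j \<in> carrier M" "\<forall>i<k. (\<Oplus>\<^bsub>M\<^esub> j\<in>{..<l}. A i j \<odot>\<^bsub>M\<^esub> p j) = \<zero>\<^bsub>M\<^esub>"
    using assms(4) unfolding nonzero_solution_def by auto
  have "(\<Oplus>\<^bsub>quotient_module M N\<^esub> j\<in>{..<l}. A i j \<odot>\<^bsub>quotient_module M N\<^esub> (N +>\<^bsub>M\<^esub> p j)) = N"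
    if "i < k" for i
    using finsum_quotient_module_lincomb[OF assms(1,2), where S = "{..<l}" and a = "A i" and p = p] assms(3) p that
      rcos_eq_submodule_iff[OF assms(1,2)]
    by auto
  then show ?thesis
    using p(1) assms(5) rcos_eq_submodule_iff[OF assms(1,2)] M.submoduleE(1)[OF assms(2)]
    unfolding nonzero_solution_def by (auto simp: quotient_module_def intro: M.a_rcosetsI)
qed

lemma partition_regular_colours_submodule_or_quotient:
  assumes "module R M" and "submodule N R M" and "\<forall>i<k. \<forall>j<l. A i j \<in> carrier R"
    and "partition_regular_colours M A k l (r + s)"
  shows "partition_regular_colours (submodule_module M N) A k l r \<or>
         partition_regular_colours (quotient_module M N) A k l s"
proof (cases "partition_regular_colours (submodule_module M N) A k l r")
  case False
  then obtain \<psi> where \<psi>: "\<psi> \<in> N \<rightarrow> {1..r}"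
    and no_\<psi>: "\<And>p. nonzero_solution M A k l p \<Longrightarrow> \<forall>j<l. p j \<in> N \<Longrightarrow> \<not> monochromatic \<psi> l p"
    using nonzero_solution_submodule_module_iff[OF assms(1-3)]
    unfolding partition_regular_colours_iff by (auto simp: submodule_module_def)
  have "partition_regular_colours (quotient_module M N) A k l s"
    unfolding partition_regular_colours_iff
  proof
    fix \<chi> assume \<chi>: "\<chi> \<in> carrier (quotient_module M N) \<rightarrow> {1..s}"
    define col where "col x = (if x \<in> N then Inl (\<psi> x) else Inr (\<chi> (N +>\<^bsub>M\<^esub> x)))" for x
    have col: "col \<in> carrier M \<rightarrow> {1..r} <+> {1..s}"
    proof
      fix x assume x: "x \<in> carrier M"
      show "col x \<in> {1..r} <+> {1..s}"
      proof (cases "x \<in> N")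
        case False
        have "N +>\<^bsub>M\<^esub> x \<in> carrier (quotient_module M N)"
          using x module.submoduleE(1)[OF assms(1,2)]
          by (simp add: quotient_module_def abelian_group.a_rcosetsI[OF module.axioms(2)[OF assms(1)]])
        with False \<chi> show ?thesis by (auto simp: col_def)
      qed (use \<psi> in \<open>auto simp: col_def\<close>)
    qed
    obtain p where p: "nonzero_solution M A k l p" "monochromatic col l p"
      using partition_regular_colours_monochromatic[OF assms(4) col] by (auto simp: card_Plus)
    consider "\<forall>j<l. p j \<in> N" | j1 where "j1 < l" "p j1 \<notin> N" by blast
    then show "\<exists>q. nonzero_solution (quotient_module M N) A k l q \<and> monochromatic \<chi> l q"
    proof cases
      case 1
      have "\<psi> (p j) = \<psi> (p j')" if "j < l" "j' < l" for j j'
      proof -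
        have "col (p j) = col (p j')"
          using p(2) that unfolding monochromatic_def by blast
        with 1 that show ?thesis by (simp add: col_def)
      qed
      then have "monochromatic \<psi> l p"
        unfolding monochromatic_def by blast
      with no_\<psi> p(1) 1 show ?thesis by blast
    next
      case 2
      have "p j \<notin> N \<and> \<chi> (N +>\<^bsub>M\<^esub> p j) = \<chi> (N +>\<^bsub>M\<^esub> p j1)" if "j < l" for j
      proof -
        have "col (p j) = col (p j1)"
          using p(2) 2 that unfolding monochromatic_def by blast
        with 2 show ?thesis by (auto simp: col_def split: if_splits)
      qed
      then have "monochromatic \<chi> l (\<lambda>j. N +>\<^bsub>M\<^esub> p j)"
        unfolding monochromatic_def by metis
      with nonzero_solution_quotient_module[OF assms(1-3) p(1)] 2 show ?thesis by blast
    qed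
  qed
  then show ?thesis ..
qed simp

definition direct_sum_component :: "('a, 'b) module \<Rightarrow> (nat \<Rightarrow> 'b set) \<Rightarrow> nat set \<Rightarrow> 'b \<Rightarrow> nat \<Rightarrow> 'b" where
  "direct_sum_component M Ms I x = (THE y. y \<in> (\<Pi>\<^sub>E i\<in>I. Ms i) \<and> x = (\<Oplus>\<^bsub>M\<^esub> i\<in>I. y i))"

lemma direct_sum_component:
  assumes "is_direct_sum M Ms I" and "x \<in> carrier M"
  shows "direct_sum_component M Ms I x \<in> (\<Pi>\<^sub>E i\<in>I. Ms i)"
    and "x = (\<Oplus>\<^bsub>M\<^esub> i\<in>I. direct_sum_component M Ms I x i)"
proof -
  have "\<exists>!y. y \<in> (\<Pi>\<^sub>E i\<in>I. Ms i) \<and> x = (\<Oplus>\<^bsub>M\<^esub> i\<in>I. y i)"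
    using assms unfolding is_direct_sum_def by blast
  then have "direct_sum_component M Ms I x \<in> (\<Pi>\<^sub>E i\<in>I. Ms i) \<and>
      x = (\<Oplus>\<^bsub>M\<^esub> i\<in>I. direct_sum_component M Ms I x i)"
    unfolding direct_sum_component_def by (rule theI')
  then show "direct_sum_component M Ms I x \<in> (\<Pi>\<^sub>E i\<in>I. Ms i)"
    and "x = (\<Oplus>\<^bsub>M\<^esub> i\<in>I. direct_sum_component M Ms I x i)" by auto
qed

lemma direct_sum_component_unique:
  assumes "is_direct_sum M Ms I" and "x \<in> carrier M"
    and "y \<in> (\<Pi>\<^sub>E i\<in>I. Ms i)" and "x = (\<Oplus>\<^bsub>M\<^esub> i\<in>I. y i)"
  shows "direct_sum_component M Ms I x = y"
proof -
  have "\<exists>!y. y \<in> (\<Pi>\<^sub>E i\<in>I. Ms i) \<and> x = (\<Oplus>\<^bsub>M\<^esub> i\<in>I. y i)"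
    using assms(1,2) unfolding is_direct_sum_def by blast
  then show ?thesis
    unfolding direct_sum_component_def by (rule the1_equality) (use assms(3,4) in blast)
qed

lemma direct_sum_component_add:
  assumes "module R M" and "\<forall>i\<in>I. submodule (Ms i) R M" and "is_direct_sum M Ms I"
    and "x \<in> carrier M" and "y \<in> carrier M"
  shows "direct_sum_component M Ms I (x \<oplus>\<^bsub>M\<^esub> y) =
         (\<lambda>i\<in>I. direct_sum_component M Ms I x i \<oplus>\<^bsub>M\<^esub> direct_sum_component M Ms I y i)"
proof (rule direct_sum_component_unique[OF assms(3)])
  interpret M: module R M by fact
  let ?x = "direct_sum_component M Ms I x" and ?y = "direct_sum_component M Ms I y"
  have x: "?x \<in> (\<Pi>\<^sub>E i\<in>I. Ms i)" and y: "?y \<in> (\<Pi>\<^sub>E i\<in>I. Ms i)"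
    using direct_sum_component(1)[OF assms(3)] assms(4,5) by auto
  have carrier: "?x i \<in> carrier M" "?y i \<in> carrier M" if "i \<in> I" for i
    using x y that assms(2) M.submoduleE(1) by blast+
  show "x \<oplus>\<^bsub>M\<^esub> y \<in> carrier M" using assms(4,5) by simp
  show "(\<lambda>i\<in>I. ?x i \<oplus>\<^bsub>M\<^esub> ?y i) \<in> (\<Pi>\<^sub>E i\<in>I. Ms i)"
    unfolding restrict_PiE_iff using x y assms(2) M.submoduleE(5) by (metis PiE_mem)
  have "x \<oplus>\<^bsub>M\<^esub> y = (\<Oplus>\<^bsub>M\<^esub> i\<in>I. ?x i) \<oplus>\<^bsub>M\<^esub> (\<Oplus>\<^bsub>M\<^esub> i\<in>I. ?y i)"
    using direct_sum_component(2)[OF assms(3)] assms(4,5) by auto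
  also have "\<dots> = (\<Oplus>\<^bsub>M\<^esub> i\<in>I. ?x i \<oplus>\<^bsub>M\<^esub> ?y i)"
    using carrier by (simp add: M.finsum_addf Pi_iff)
  also have "\<dots> = (\<Oplus>\<^bsub>M\<^esub> i\<in>I. (\<lambda>i\<in>I. ?x i \<oplus>\<^bsub>M\<^esub> ?y i) i)"
    using carrier by (intro M.finsum_cong') auto
  finally show "x \<oplus>\<^bsub>M\<^esub> y = (\<Oplus>\<^bsub>M\<^esub> i\<in>I. (\<lambda>i\<in>I. ?x i \<oplus>\<^bsub>M\<^esub> ?y i) i)" .
qed

lemma direct_sum_component_smult:
  assumes "module R M" and "\<forall>i\<in>I. submodule (Ms i) R M" and "is_direct_sum M Ms I"
    and "finite I" and "a \<in> carrier R" and "x \<in> carrier M"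
  shows "direct_sum_component M Ms I (a \<odot>\<^bsub>M\<^esub> x) = (\<lambda>i\<in>I. a \<odot>\<^bsub>M\<^esub> direct_sum_component M Ms I x i)"
proof (rule direct_sum_component_unique[OF assms(3)])
  interpret M: module R M by fact
  let ?x = "direct_sum_component M Ms I x"
  have x: "?x \<in> (\<Pi>\<^sub>E i\<in>I. Ms i)"
    using direct_sum_component(1)[OF assms(3,6)] .
  have carrier: "?x i \<in> carrier M" if "i \<in> I" for i
    using x that assms(2) M.submoduleE(1) by blast
  show "a \<odot>\<^bsub>M\<^esub> x \<in> carrier M" using assms(5,6) by simp
  show "(\<lambda>i\<in>I. a \<odot>\<^bsub>M\<^esub> ?x i) \<in> (\<Pi>\<^sub>E i\<in>I. Ms i)"
    unfolding restrict_PiE_iff using x assms(2,5) M.submoduleE(4) by (metis PiE_mem)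
  have "a \<odot>\<^bsub>M\<^esub> x = a \<odot>\<^bsub>M\<^esub> (\<Oplus>\<^bsub>M\<^esub> i\<in>I. ?x i)"
    using direct_sum_component(2)[OF assms(3,6)] by simp
  also have "\<dots> = (\<Oplus>\<^bsub>M\<^esub> i\<in>I. a \<odot>\<^bsub>M\<^esub> ?x i)"
    using carrier assms(4,5) by (simp add: M.finsum_smult_ldistr Pi_iff)
  also have "\<dots> = (\<Oplus>\<^bsub>M\<^esub> i\<in>I. (\<lambda>i\<in>I. a \<odot>\<^bsub>M\<^esub> ?x i) i)"
    using carrier assms(5) by (intro M.finsum_cong') auto
  finally show "a \<odot>\<^bsub>M\<^esub> x = (\<Oplus>\<^bsub>M\<^esub> i\<in>I. (\<lambda>i\<in>I. a \<odot>\<^bsub>M\<^esub> ?x i) i)" .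
qed

lemma direct_sum_component_lincomb:
  assumes "module R M" and "\<forall>i\<in>I. submodule (Ms i) R M" and "is_direct_sum M Ms I"
    and "finite I" and "i \<in> I" and "a \<in> S \<rightarrow> carrier R" and "p \<in> S \<rightarrow> carrier M"
  shows "direct_sum_component M Ms I (\<Oplus>\<^bsub>M\<^esub> j\<in>S. a j \<odot>\<^bsub>M\<^esub> p j) i =
         (\<Oplus>\<^bsub>M\<^esub> j\<in>S. a j \<odot>\<^bsub>M\<^esub> direct_sum_component M Ms I (p j) i)"
proof -
  interpret M: module R M by fact
  let ?D = "\<lambda>x. direct_sum_component M Ms I x i"
  have D_carrier: "?D x \<in> carrier M" if "x \<in> carrier M" for x
    using direct_sum_component(1)[OF assms(3) that] assms(2,5) M.submoduleE(1) by blast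
  have lincomb: "(\<lambda>j. a j \<odot>\<^bsub>M\<^esub> p j) \<in> S \<rightarrow> carrier M"
    using assms(6,7) by auto
  have D_hom: "?D \<in> hom (add_monoid M) (add_monoid M)"
    using D_carrier direct_sum_component_add[OF assms(1-3)] assms(5) by (auto simp: hom_def)
  have "?D (\<Oplus>\<^bsub>M\<^esub> j\<in>S. a j \<odot>\<^bsub>M\<^esub> p j) = (\<Oplus>\<^bsub>M\<^esub> j\<in>S. ?D (a j \<odot>\<^bsub>M\<^esub> p j))"
    using comm_group_hom_finprod[OF M.a_comm_group M.a_comm_group D_hom, of "\<lambda>j. a j \<odot>\<^bsub>M\<^esub> p j" S]
      lincomb by (simp add: finsum_def comp_def)
  also have "\<dots> = (\<Oplus>\<^bsub>M\<^esub> j\<in>S. a j \<odot>\<^bsub>M\<^esub> ?D (p j))"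
    using assms(5-7) D_carrier direct_sum_component_smult[OF assms(1-4)]
    by (intro M.finsum_cong') (auto simp: Pi_iff)
  finally show ?thesis .
qed

lemma direct_sum_component_nonzero:
  assumes "module R M" and "is_direct_sum M Ms I"
    and "x \<in> carrier M" and "x \<noteq> \<zero>\<^bsub>M\<^esub>"
  shows "\<exists>i\<in>I. direct_sum_component M Ms I x i \<noteq> \<zero>\<^bsub>M\<^esub>"
proof (rule ccontr)
  interpret M: module R M by fact
  assume "\<not> ?thesis"
  then have "(\<Oplus>\<^bsub>M\<^esub> i\<in>I. direct_sum_component M Ms I x i) = (\<Oplus>\<^bsub>M\<^esub> i\<in>I. \<zero>\<^bsub>M\<^esub>)"
    by (intro M.finsum_cong') auto
  with direct_sum_component(2)[OF assms(2,3)] assms(4) show False by simp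
qed

lemma nonzero_solution_direct_sum_component:
  assumes "module R M" and "\<forall>i\<in>I. submodule (Ms i) R M" and "is_direct_sum M Ms I"
    and "finite I" and "\<forall>i<k. \<forall>j<l. A i j \<in> carrier R"
    and "nonzero_solution M A k l p" and "i \<in> I"
    and "j0 < l" and "direct_sum_component M Ms I (p j0) i \<noteq> \<zero>\<^bsub>M\<^esub>"
  shows "nonzero_solution (submodule_module M (Ms i)) A k l (\<lambda>j. direct_sum_component M Ms I (p j) i)"
proof -
  interpret M: module R M by fact
  let ?D = "\<lambda>x. direct_sum_component M Ms I x i"
  have p: "\<forall>j<l. p j \<in> carrier M" "\<forall>i'<k. (\<Oplus>\<^bsub>M\<^esub> j\<in>{..<l}. A i' j \<odot>\<^bsub>M\<^esub> p j) = \<zero>\<^bsub>M\<^esub>"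
    using assms(6) unfolding nonzero_solution_def by auto
  have component: "?D x \<in> Ms i" if "x \<in> carrier M" for x
    using direct_sum_component(1)[OF assms(3) that] assms(7) by auto
  have D_zero: "?D \<zero>\<^bsub>M\<^esub> = \<zero>\<^bsub>M\<^esub>"
    using direct_sum_component_lincomb[OF assms(1-4,7), where S = "{}"] by simp
  have "nonzero_solution M A k l (\<lambda>j. ?D (p j))"
    unfolding nonzero_solution_def
  proof (intro conjI allI impI)
    show "?D (p j) \<in> carrier M" if "j < l" for j
      using component p(1) that M.submoduleE(1) assms(2,7) by blast
    show "(\<Oplus>\<^bsub>M\<^esub> j\<in>{..<l}. A i' j \<odot>\<^bsub>M\<^esub> ?D (p j)) = \<zero>\<^bsub>M\<^esub>" if "i' < k" for i'
    proof -
      have "(\<Oplus>\<^bsub>M\<^esub> j\<in>{..<l}. A i' j \<odot>\<^bsub>M\<^esub> ?D (p j)) = ?D (\<Oplus>\<^bsub>M\<^esub> j\<in>{..<l}. A i' j \<odot>\<^bsub>M\<^esub> p j)"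
        using assms(5) p(1) that by (intro direct_sum_component_lincomb[OF assms(1-4,7), symmetric]) auto
      with p(2) that D_zero show ?thesis by simp
    qed
    show "\<exists>j<l. ?D (p j) \<noteq> \<zero>\<^bsub>M\<^esub>"
      using assms(8,9) by blast
  qed
  then show ?thesis
    using nonzero_solution_submodule_module_iff[OF assms(1) _ assms(5)] assms(2,7) component p(1)
    by auto
qed

lemma partition_regular_direct_sum_monochromatic_component:
  fixes rr :: "nat \<Rightarrow> nat"
  assumes "module R M" and "\<forall>i\<in>I. submodule (Ms i) R M" and "is_direct_sum M Ms I"
    and "finite I" and "\<forall>i<k. \<forall>j<l. A i j \<in> carrier R"
    and "partition_regular M A k l" and "\<And>i. i \<in> I \<Longrightarrow> \<chi> i \<in> Ms i \<rightarrow> {1..rr i}"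
  shows "\<exists>i\<in>I. \<exists>q. nonzero_solution (submodule_module M (Ms i)) A k l q \<and> monochromatic (\<chi> i) l q"
proof -
  define col where "col x = (\<lambda>i\<in>I. \<chi> i (direct_sum_component M Ms I x i))" for x
  let ?C = "\<Pi>\<^sub>E i\<in>I. {1..rr i}"
  have col: "col \<in> carrier M \<rightarrow> ?C"
    using assms(7) direct_sum_component(1)[OF assms(3)] unfolding col_def by fastforce
  have "finite ?C"
    using assms(4) by (simp add: finite_PiE)
  moreover have "partition_regular_colours M A k l (max 1 (card ?C))"
    using assms(6) unfolding partition_regular_def by simp
  ultimately obtain p where p: "nonzero_solution M A k l p" "monochromatic col l p"
    using partition_regular_colours_monochromatic[OF _ col] by fastforce
  obtain j0 where j0: "j0 < l" "p j0 \<noteq> \<zero>\<^bsub>M\<^esub>" "p j0 \<in> carrier M"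
    using p(1) unfolding nonzero_solution_def by blast
  then obtain i where i: "i \<in> I" "direct_sum_component M Ms I (p j0) i \<noteq> \<zero>\<^bsub>M\<^esub>"
    using direct_sum_component_nonzero[OF assms(1,3)] by blast
  have "\<chi> i (direct_sum_component M Ms I (p j) i) = \<chi> i (direct_sum_component M Ms I (p j') i)"
    if "j < l" "j' < l" for j j'
  proof -
    have "col (p j) = col (p j')"
      using p(2) that unfolding monochromatic_def by blast
    then have "col (p j) i = col (p j') i" by simp
    with i(1) show ?thesis by (simp add: col_def)
  qed
  then have "monochromatic (\<chi> i) l (\<lambda>j. direct_sum_component M Ms I (p j) i)"
    unfolding monochromatic_def by blast
  with nonzero_solution_direct_sum_component[OF assms(1-5) p(1) i(1) j0(1) i(2)] i(1)
  show ?thesis by blast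
qed

lemma partition_regular_direct_sum_iff:
  assumes "module R M" and "\<forall>i\<in>I. submodule (Ms i) R M" and "is_direct_sum M Ms I"
    and "finite I" and "\<forall>i<k. \<forall>j<l. A i j \<in> carrier R"
  shows "partition_regular M A k l \<longleftrightarrow> (\<exists>i\<in>I. partition_regular (submodule_module M (Ms i)) A k l)"
proof
  assume "\<exists>i\<in>I. partition_regular (submodule_module M (Ms i)) A k l"
  then show "partition_regular M A k l"
    using partition_regular_colours_of_submodule_module[OF assms(1) _ assms(5)] assms(2)
    unfolding partition_regular_def by blast
next
  assume regular: "partition_regular M A k l"
  show "\<exists>i\<in>I. partition_regular (submodule_module M (Ms i)) A k l"
  proof (rule ccontr)
    assume none: "\<not> ?thesis"
    have "\<forall>i\<in>I. \<exists>(r::nat) \<chi>. \<chi> \<in> Ms i \<rightarrow> {1..r} \<and>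
        (\<forall>q. nonzero_solution (submodule_module M (Ms i)) A k l q \<longrightarrow> \<not> monochromatic \<chi> l q)"
      using none unfolding partition_regular_def partition_regular_colours_iff carrier_submodule_module
      by blast
    from bchoice[OF this] obtain rr :: "nat \<Rightarrow> nat" where "\<forall>i\<in>I. \<exists>\<chi>. \<chi> \<in> Ms i \<rightarrow> {1..rr i} \<and>
        (\<forall>q. nonzero_solution (submodule_module M (Ms i)) A k l q \<longrightarrow> \<not> monochromatic \<chi> l q)"
      by blast
    from bchoice[OF this] obtain \<chi> where "\<And>i. i \<in> I \<Longrightarrow> \<chi> i \<in> Ms i \<rightarrow> {1..rr i}"
      and "\<And>i q. i \<in> I \<Longrightarrow> nonzero_solution (submodule_module M (Ms i)) A k l q \<Longrightarrow>
                    \<not> monochromatic (\<chi> i) l q"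
      by blast
    with partition_regular_direct_sum_monochromatic_component[OF assms regular] show False
      by blast
  qed
qed

theorem proposition1p6:
  fixes R :: "'a ring" and M :: "('a, 'b) module" and N :: "'b set"
    and A :: "nat \<Rightarrow> nat \<Rightarrow> 'a" and k l r s :: nat
  assumes "module R M"
    and "submodule N R M"
    and "\<forall>i<k. \<forall>j<l. A i j \<in> carrier R"
    and "r \<ge> 1" and "s \<ge> 1"
  shows "(partition_regular_colours M A k l (r + s) \<longrightarrow>
            partition_regular_colours (submodule_module M N) A k l r \<or>
            partition_regular_colours (quotient_module M N) A k l s)
       \<and> (\<forall>(t::nat) (Ms :: nat \<Rightarrow> 'b set).
            (\<forall>i\<in>{1..t}. submodule (Ms i) R M) \<and> is_direct_sum M Ms {1..t} \<longrightarrow>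
            (partition_regular M A k l \<longleftrightarrow>
             (\<exists>i\<in>{1..t}. partition_regular (submodule_module M (Ms i)) A k l)))"
  using partition_regular_colours_submodule_or_quotient[OF assms(1-3)]
    partition_regular_direct_sum_iff[OF assms(1) _ _ finite_atLeastAtMost assms(3)]
  by blast

end
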